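(* Fix $C\ge0$. For $0\le k\le n$ put $N=n-k$ and \[ T_k=\sum_{g\in\mathcal M(k)}\Bigl|\sum_{h\in\mathcal M(N)}\psi(Q_A(gh))\Bigr|. \] Then as $n\to\infty$, uniformly for $0\le k\le 9n/20+C$, $T_k\ll_A q^{19n/20+o(n)}$.
   Context: $q$ is a fixed odd prime power; fix $m\ge0$ and $c_0,\dots,c_m\in\mathbb F_q$ with $c_m\ne0$. For each $n$, $\ell_n$ is an arbitrary linear form in the coefficients $f_0,\dots,f_n$ and for $f=\sum_{i=0}^nf_it^i$ of degree $n$, $Q_A(f)=\sum_{j=0}^m c_j\sum_{i=j}^n f_if_{i-j}+\ell_n(f)$. $\mathcal M(k)$ is the set of monic polynomials of degree $k$ in $\mathbb F_q[t]$, $\psi$ a non-trivial additive character of $\mathbb F_q$. Implied constants depend only on $q$, $C$ and $c_0,\dots,c_m$ and are uniform in $\ell_n,\psi$; $q^{o(n)}$ is a factor $q^{\varepsilon(n)n}$ with $\varepsilon(n)\to0$. *)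

theory Defs
  imports "HOL-Analysis.Analysis" "HOL-Computational_Algebra.Polynomial"
begin

definition monics :: "nat \<Rightarrow> ('a::field) poly set" where
  "monics k = {p. degree p = k \<and> lead_coeff p = 1}"

definition nontriv_add_char :: "('a::field \<Rightarrow> complex) \<Rightarrow> bool" where
  "nontriv_add_char \<psi> \<longleftrightarrow> (\<forall>x y. \<psi> (x + y) = \<psi> x * \<psi> y) \<and> (\<exists>x. \<psi> x \<noteq> 1)"

text \<open>The quadratic form Q_A: for f of degree n,
  sum_{j=0}^m c_j sum_{i=j}^n f_i f_{i-j} + l_n(f), where the linear form l_n
  is given by its coefficient vector l n 0, ..., l n n.\<close>
definition QA :: "nat \<Rightarrow> (nat \<Rightarrow> 'a::field) \<Rightarrow> (nat \<Rightarrow> nat \<Rightarrow> 'a) \<Rightarrow> 'a poly \<Rightarrow> 'a" where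
  "QA m c l f = (let n = degree f in
     (\<Sum>j\<le>m. c j * (\<Sum>i=j..n. coeff f i * coeff f (i - j))) + (\<Sum>i\<le>n. l n i * coeff f i))"

definition Tk :: "nat \<Rightarrow> (nat \<Rightarrow> 'a::field) \<Rightarrow> (nat \<Rightarrow> nat \<Rightarrow> 'a) \<Rightarrow> ('a \<Rightarrow> complex)
                   \<Rightarrow> nat \<Rightarrow> nat \<Rightarrow> real" where
  "Tk m c l \<psi> n k = (\<Sum>g\<in>monics k. norm (\<Sum>h\<in>monics (n - k). \<psi> (QA m c l (g * h))))"

end

theory Submission
  imports Defs
begin

text \<open>Weyl differencing. Fix \<open>g\<close> and write \<open>h = t\<^sup>N + y\<close> with \<open>deg y < N\<close>.
  Squaring the inner sum and substituting \<open>y \<mapsto> y + z\<close>, the phase difference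
  \<open>Q\<^sub>A(g(t\<^sup>N + y + z)) - Q\<^sub>A(g(t\<^sup>N + y))\<close> is a function of \<open>z\<close> plus the polar form of
  \<open>Q\<^sub>A\<close> evaluated at \<open>(g y, g z)\<close>, which is linear in \<open>y\<close>; summing over \<open>y\<close> kills
  every \<open>z\<close> outside the radical of this form. Writing the polar form through a fixed
  polynomial \<open>B \<noteq> 0\<close> of degree \<open>\<le> 2m\<close> (here \<open>2 \<noteq> 0\<close> and \<open>c\<^sub>m \<noteq> 0\<close> are used), a
  triangular argument shows that an element \<open>z\<close> of the radical is determined by
  \<open>k + 2m\<close> coefficients of \<open>B g z\<close>. Hence the inner sum is at most
  \<open>q\<^bsup>(n+2m)/2\<^esup>\<close> and \<open>T\<^sub>k \<le> q\<^bsup>k + (n+2m)/2\<^esup> \<ll> q\<^bsup>19n/20\<^esup>\<close> for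
  \<open>k \<le> 9n/20 + C\<close>; no \<open>q\<^bsup>o(n)\<^esup>\<close> loss occurs.\<close>

lemma even_card_if_two_eq_zero:
  assumes "(2::'a::{finite,ring_1}) = 0"
  shows "even CARD('a)"
proof -
  define C where "C = range (\<lambda>x::'a. {x, x + 1})"
  have card_pair: "card c = 2" if "c \<in> C" for c
    using that assms by (auto simp: C_def)
  have disjoint_pairs: "c \<inter> c' = {}" if "c \<in> C" "c' \<in> C" "c \<noteq> c'" for c c'
    using that assms by (auto simp: C_def)
  have "2 * card C = card (\<Union>C)"
    by (rule card_partition) (simp_all add: card_pair disjoint_pairs)
  also have "\<Union>C = UNIV" by (auto simp: C_def)
  finally have "2 * card C = CARD('a)" .
  then show ?thesis by (metis dvd_triv_left)
qed

lemma two_neq_zero_if_odd_card: "odd CARD('a::{finite,ring_1}) \<Longrightarrow> (2::'a) \<noteq> 0"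
  using even_card_if_two_eq_zero by blast

subsection \<open>Additive characters\<close>

lemma nontriv_add_char_cases:
  assumes "nontriv_add_char \<psi>"
  obtains "\<psi> = (\<lambda>_. 0)" | "\<psi> 0 = 1"
proof -
  have hom: "\<psi> (x + y) = \<psi> x * \<psi> y" for x y
    using assms unfolding nontriv_add_char_def by blast
  show thesis
  proof (cases "\<psi> 0 = 0")
    case True
    then have "\<psi> = (\<lambda>_. 0)" using hom[of _ 0] by auto
    then show thesis by (rule that(1))
  next
    case False
    then have "\<psi> 0 = 1" using hom[of 0 0] by simp
    then show thesis by (rule that(2))
  qed
qed

lemma add_char_of_nat_mult:
  assumes "\<And>x y. \<psi> (x + y) = \<psi> x * \<psi> y" and "\<psi> 0 = 1"
  shows "\<psi> (of_nat n * a) = \<psi> a ^ n"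
  by (induction n) (simp_all add: assms distrib_right)

lemma add_char_norm_eq_1:
  fixes \<psi> :: "'a::{finite,field} \<Rightarrow> complex"
  assumes "\<And>x y. \<psi> (x + y) = \<psi> x * \<psi> y" and "\<psi> 0 = 1"
  shows "norm (\<psi> a) = 1"
proof -
  have "\<psi> a ^ CHAR('a) = 1"
    using add_char_of_nat_mult[OF assms, of "CHAR('a)" a] assms(2) by simp
  then have "norm (\<psi> a) ^ CHAR('a) = 1 ^ CHAR('a)"
    by (metis norm_one norm_power power_one)
  then show ?thesis
    by (rule power_eq_imp_eq_base) (simp_all add: finite_imp_CHAR_pos)
qed

lemma char_sum_eq_0:
  fixes \<theta> :: "'b::ab_group_add \<Rightarrow> complex"
  assumes add: "\<And>y z. y \<in> P \<Longrightarrow> z \<in> P \<Longrightarrow> y + z \<in> P"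
    and diff: "\<And>y z. y \<in> P \<Longrightarrow> z \<in> P \<Longrightarrow> y - z \<in> P"
    and hom: "\<And>y z. y \<in> P \<Longrightarrow> z \<in> P \<Longrightarrow> \<theta> (y + z) = \<theta> y * \<theta> z"
    and "y\<^sub>0 \<in> P" and "\<theta> y\<^sub>0 \<noteq> 1"
  shows "(\<Sum>y\<in>P. \<theta> y) = 0"
proof -
  have "bij_betw (\<lambda>y. y + y\<^sub>0) P P"
    by (rule bij_betw_byWitness[where f'="\<lambda>y. y - y\<^sub>0"]) (use assms in auto)
  then have "(\<Sum>y\<in>P. \<theta> y) = (\<Sum>y\<in>P. \<theta> (y + y\<^sub>0))"
    by (rule sum.reindex_bij_betw[symmetric])
  also have "\<dots> = (\<Sum>y\<in>P. \<theta> y) * \<theta> y\<^sub>0"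
    by (simp add: hom \<open>y\<^sub>0 \<in> P\<close> sum_distrib_right)
  finally have "(\<Sum>y\<in>P. \<theta> y) * (\<theta> y\<^sub>0 - 1) = 0"
    by (simp add: algebra_simps)
  then show ?thesis using \<open>\<theta> y\<^sub>0 \<noteq> 1\<close> by simp
qed

lemma weyl_differencing_identity:
  fixes \<psi> :: "'a::ab_group_add \<Rightarrow> complex" and P :: "'b::ab_group_add set"
  assumes hom: "\<And>x y. \<psi> (x + y) = \<psi> x * \<psi> y" and unit: "\<And>x. norm (\<psi> x) = 1"
    and add: "\<And>y z. y \<in> P \<Longrightarrow> z \<in> P \<Longrightarrow> y + z \<in> P"
    and diff: "\<And>y z. y \<in> P \<Longrightarrow> z \<in> P \<Longrightarrow> y - z \<in> P"
    and shift: "\<And>y z. y \<in> P \<Longrightarrow> z \<in> P \<Longrightarrow> F (y + z) = F y + \<phi> z + X y z"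
  shows "complex_of_real ((norm (\<Sum>x\<in>P. \<psi> (F x)))\<^sup>2) =
    (\<Sum>z\<in>P. \<psi> (\<phi> z) * (\<Sum>y\<in>P. \<psi> (X y z)))"
proof -
  define S where "S = (\<Sum>x\<in>P. \<psi> (F x))"
  have shift_sum: "S = (\<Sum>z\<in>P. \<psi> (F (y + z)))" if "y \<in> P" for y
  proof -
    have "bij_betw (\<lambda>z. y + z) P P"
      by (rule bij_betw_byWitness[where f'="\<lambda>x. x - y"]) (use that add diff in auto)
    then show ?thesis unfolding S_def by (rule sum.reindex_bij_betw[symmetric])
  qed
  have cancel_F: "cnj (\<psi> (F y)) * \<psi> (F (y + z)) = \<psi> (\<phi> z) * \<psi> (X y z)"
    if "y \<in> P" "z \<in> P" for y z
  proof -
    have "cnj (\<psi> (F y)) * \<psi> (F (y + z)) =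
        (cnj (\<psi> (F y)) * \<psi> (F y)) * (\<psi> (\<phi> z) * \<psi> (X y z))"
      by (simp add: shift[OF that] hom mult.assoc)
    moreover have "cnj (\<psi> (F y)) * \<psi> (F y) = 1"
      using complex_norm_square[of "\<psi> (F y)"] unit by (simp add: mult.commute)
    ultimately show ?thesis by simp
  qed
  have "complex_of_real ((norm S)\<^sup>2) = cnj S * S"
    using complex_norm_square[of S] by (simp add: mult.commute)
  also have "\<dots> = (\<Sum>y\<in>P. cnj (\<psi> (F y)) * S)"
    unfolding S_def cnj_sum by (rule sum_distrib_right)
  also have "\<dots> = (\<Sum>y\<in>P. \<Sum>z\<in>P. cnj (\<psi> (F y)) * \<psi> (F (y + z)))"
  proof (rule sum.cong[OF refl])
    fix y assume "y \<in> P"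
    show "cnj (\<psi> (F y)) * S = (\<Sum>z\<in>P. cnj (\<psi> (F y)) * \<psi> (F (y + z)))"
      unfolding shift_sum[OF \<open>y \<in> P\<close>] by (rule sum_distrib_left)
  qed
  also have "\<dots> = (\<Sum>y\<in>P. \<Sum>z\<in>P. \<psi> (\<phi> z) * \<psi> (X y z))"
    by (intro sum.cong refl) (rule cancel_F)
  also have "\<dots> = (\<Sum>z\<in>P. \<psi> (\<phi> z) * (\<Sum>y\<in>P. \<psi> (X y z)))"
    by (subst sum.swap) (simp only: sum_distrib_left)
  finally show ?thesis unfolding S_def .
qed

lemma weyl_differencing:
  fixes \<psi> :: "'a::ab_group_add \<Rightarrow> complex" and P :: "'b::ab_group_add set"
  assumes hom: "\<And>x y. \<psi> (x + y) = \<psi> x * \<psi> y" and unit: "\<And>x. norm (\<psi> x) = 1"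
    and "finite P"
    and add: "\<And>y z. y \<in> P \<Longrightarrow> z \<in> P \<Longrightarrow> y + z \<in> P"
    and diff: "\<And>y z. y \<in> P \<Longrightarrow> z \<in> P \<Longrightarrow> y - z \<in> P"
    and shift: "\<And>y z. y \<in> P \<Longrightarrow> z \<in> P \<Longrightarrow> F (y + z) = F y + \<phi> z + X y z"
    and cancel: "\<And>z. z \<in> P \<Longrightarrow> \<exists>y\<in>P. X y z \<noteq> 0 \<Longrightarrow> (\<Sum>y\<in>P. \<psi> (X y z)) = 0"
  shows "(norm (\<Sum>x\<in>P. \<psi> (F x)))\<^sup>2 \<le> card P * card {z \<in> P. \<forall>y\<in>P. X y z = 0}"
proof -
  define S where "S = (\<Sum>x\<in>P. \<psi> (F x))"
  have inner: "norm (\<Sum>y\<in>P. \<psi> (X y z)) = (if \<forall>y\<in>P. X y z = 0 then real (card P) else 0)"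
    if "z \<in> P" for z
  proof (cases "\<forall>y\<in>P. X y z = 0")
    case True
    then have "(\<Sum>y\<in>P. \<psi> (X y z)) = of_nat (card P) * \<psi> 0" by simp
    then show ?thesis using True by (simp add: norm_mult unit)
  next
    case False
    then show ?thesis using cancel[OF that] by auto
  qed
  have "(norm S)\<^sup>2 = norm (complex_of_real ((norm S)\<^sup>2))"
    by (simp only: norm_of_real abs_power2 abs_norm_cancel)
  also have "\<dots> = norm (\<Sum>z\<in>P. \<psi> (\<phi> z) * (\<Sum>y\<in>P. \<psi> (X y z)))"
    using weyl_differencing_identity[OF hom unit add diff shift] by (simp only: S_def)
  also have "\<dots> \<le> (\<Sum>z\<in>P. norm (\<psi> (\<phi> z) * (\<Sum>y\<in>P. \<psi> (X y z))))"
    by (rule norm_sum)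
  also have "\<dots> = (\<Sum>z\<in>P. if \<forall>y\<in>P. X y z = 0 then real (card P) else 0)"
    by (intro sum.cong refl) (simp add: norm_mult unit inner)
  also have "\<dots> = card P * card {z \<in> P. \<forall>y\<in>P. X y z = 0}"
    using \<open>finite P\<close> by (subst sum.inter_filter[symmetric]) simp_all
  finally show ?thesis unfolding S_def .
qed

subsection \<open>Counting polynomials\<close>

definition polys_below :: "nat \<Rightarrow> 'a::zero poly set" where
  "polys_below N = {p. \<forall>i\<ge>N. coeff p i = 0}"

lemma polys_below_iff: "p \<in> polys_below N \<longleftrightarrow> p = 0 \<or> degree p < N"
proof
  assume p: "p \<in> polys_below N"
  show "p = 0 \<or> degree p < N"
  proof (rule ccontr)
    assume "\<not> (p = 0 \<or> degree p < N)"
    then have "coeff p (degree p) = 0" using p by (simp add: polys_below_def)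
    with \<open>\<not> (p = 0 \<or> degree p < N)\<close> show False by simp
  qed
next
  assume "p = 0 \<or> degree p < N"
  then show "p \<in> polys_below N" by (auto simp: polys_below_def intro: coeff_eq_0)
qed

lemma add_in_polys_below: "p \<in> polys_below N \<Longrightarrow> q \<in> polys_below N \<Longrightarrow> p + q \<in> polys_below N"
  by (simp add: polys_below_def)

lemma diff_in_polys_below:
  "p \<in> polys_below N \<Longrightarrow> q \<in> polys_below N \<Longrightarrow> p - q \<in> polys_below N"
  by (simp add: polys_below_def)

lemma smult_in_polys_below: "p \<in> polys_below N \<Longrightarrow> smult a p \<in> polys_below N"
  by (simp add: polys_below_def)

lemma mult_in_polys_below:
  fixes g p :: "'a::comm_semiring_0 poly"
  assumes "p \<in> polys_below N" and "degree g \<le> k"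
  shows "g * p \<in> polys_below (k + N)"
  using assms degree_mult_le[of g p] by (auto simp: polys_below_iff)

lemma monom_in_polys_below: "r < N \<Longrightarrow> monom a r \<in> polys_below N"
  by (simp add: polys_below_def)

lemma card_le_power_if_inj_on_restrict:
  fixes f :: "'b \<Rightarrow> 'c \<Rightarrow> 'a::finite"
  assumes "inj_on (\<lambda>x. restrict (f x) I) A" and "finite I"
  shows "finite A" and "card A \<le> CARD('a) ^ card I"
proof -
  have into: "(\<lambda>x. restrict (f x) I) ` A \<subseteq> I \<rightarrow>\<^sub>E UNIV" by auto
  have "finite (I \<rightarrow>\<^sub>E (UNIV :: 'a set))"
    using assms(2) by (simp add: finite_PiE)
  then show "finite A" and "card A \<le> CARD('a) ^ card I"
    using inj_on_finite[OF assms(1) into] card_inj_on_le[OF assms(1) into] assms(2)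
    by (simp_all add: card_PiE)
qed

lemma
  shows finite_polys_below: "finite (polys_below N :: 'a::{finite,zero} poly set)"
    and card_polys_below_le: "card (polys_below N :: 'a poly set) \<le> CARD('a) ^ N"
proof -
  have "inj_on (\<lambda>p. restrict (coeff p) {..<N}) (polys_below N :: 'a poly set)"
  proof (rule inj_onI)
    fix p q :: "'a poly"
    assume "p \<in> polys_below N" "q \<in> polys_below N"
      and "restrict (coeff p) {..<N} = restrict (coeff q) {..<N}"
    then have "coeff p i = coeff q i" for i
      by (cases "i < N") (auto simp: polys_below_def dest: fun_cong[of _ _ i])
    then show "p = q" by (simp add: poly_eq_iff)
  qed
  from card_le_power_if_inj_on_restrict[OF this] show "finite (polys_below N :: 'a poly set)"
    and "card (polys_below N :: 'a poly set) \<le> CARD('a) ^ N" by simp_all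
qed

lemma monics_eq_image: "monics N = (\<lambda>p. monom 1 N + p) ` polys_below N"
proof (intro set_eqI iffI)
  fix h :: "'a poly"
  assume h: "h \<in> monics N"
  then have "h - monom 1 N \<in> polys_below N"
    by (auto simp: monics_def polys_below_def coeff_monom le_less intro: coeff_eq_0)
  then show "h \<in> (\<lambda>p. monom 1 N + p) ` polys_below N"
    by (intro image_eqI[of _ _ "h - monom 1 N"]) simp_all
next
  fix h :: "'a poly"
  assume "h \<in> (\<lambda>p. monom 1 N + p) ` polys_below N"
  then obtain p where p: "p \<in> polys_below N" and h: "h = monom 1 N + p" by blast
  have "coeff h N = 1" using p by (simp add: h polys_below_def)
  moreover have "degree h \<le> N"
    using p by (intro degree_le) (auto simp: h polys_below_def coeff_monom)
  ultimately have "degree h = N" using le_degree[of h N] by simp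
  with \<open>coeff h N = 1\<close> show "h \<in> monics N" by (simp add: monics_def)
qed

lemma card_monics_le: "card (monics N :: 'a::{finite,field} poly set) \<le> CARD('a) ^ N"
  using finite_polys_below[of N] card_polys_below_le[of N] card_image_le[of _ "\<lambda>p. monom 1 N + p"]
  by (auto simp: monics_eq_image intro: order_trans)

lemma mult_in_monics: "g \<in> monics k \<Longrightarrow> h \<in> monics N \<Longrightarrow> g * h \<in> monics (k + N)"
  by (auto simp: monics_def lead_coeff_mult intro!: degree_mult_eq)

subsection \<open>The polar form of \<open>Q\<^sub>A\<close>\<close>

definition quad_part :: "nat \<Rightarrow> (nat \<Rightarrow> 'a::comm_ring_1) \<Rightarrow> nat \<Rightarrow> 'a poly \<Rightarrow> 'a" where
  "quad_part m c n f = (\<Sum>j\<le>m. c j * (\<Sum>i=j..n. coeff f i * coeff f (i - j)))"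

definition linear_part :: "(nat \<Rightarrow> nat \<Rightarrow> 'a::comm_ring_1) \<Rightarrow> nat \<Rightarrow> 'a poly \<Rightarrow> 'a" where
  "linear_part l n f = (\<Sum>i\<le>n. l n i * coeff f i)"

text \<open>\<open>polar_form m c n u v = \<Sum>\<^sub>i u\<^sub>i \<Sum>\<^sub>j c\<^sub>j (v\<^sub>i\<^sub>-\<^sub>j + v\<^sub>i\<^sub>+\<^sub>j)\<close> (with \<open>v\<^sub>s = 0\<close> for \<open>s < 0\<close>)
  is the polar form of \<open>quad_part\<close>; the polynomial \<open>polar_kernel m c\<close> writes the
  inner sum as a coefficient of a product.\<close>

definition polar_kernel :: "nat \<Rightarrow> (nat \<Rightarrow> 'a::comm_ring_1) \<Rightarrow> 'a poly" where
  "polar_kernel m c = (\<Sum>j\<le>m. smult (c j) (monom 1 (m - j) + monom 1 (m + j)))"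

definition polar_form :: "nat \<Rightarrow> (nat \<Rightarrow> 'a::comm_ring_1) \<Rightarrow> nat \<Rightarrow> 'a poly \<Rightarrow> 'a poly \<Rightarrow> 'a" where
  "polar_form m c n u v = (\<Sum>i\<le>n. coeff u i * coeff (polar_kernel m c * v) (i + m))"

lemma QA_eq_quad_part_plus_linear_part:
  "degree f = n \<Longrightarrow> QA m c l f = quad_part m c n f + linear_part l n f"
  by (simp add: QA_def quad_part_def linear_part_def Let_def)

lemma coeff_polar_kernel_mult:
  "coeff (polar_kernel m c * v) (i + m) =
     (\<Sum>j\<le>m. c j * ((if j \<le> i then coeff v (i - j) else 0) + coeff v (i + j)))"
proof -
  have "polar_kernel m c * v = (\<Sum>j\<le>m. smult (c j) (monom 1 (m - j) * v + monom 1 (m + j) * v))"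
    by (simp add: polar_kernel_def sum_distrib_right distrib_right)
  then have "coeff (polar_kernel m c * v) (i + m) =
      (\<Sum>j\<le>m. c j * (coeff (monom 1 (m - j) * v) (i + m) + coeff (monom 1 (m + j) * v) (i + m)))"
    by (simp add: coeff_sum)
  also have "\<dots> = (\<Sum>j\<le>m. c j * ((if j \<le> i then coeff v (i - j) else 0) + coeff v (i + j)))"
    by (intro sum.cong refl) (auto simp: coeff_monom_mult add.commute)
  finally show ?thesis .
qed

lemma polar_kernel_nonzero:
  fixes c :: "nat \<Rightarrow> 'a::idom"
  assumes "c m \<noteq> 0" and "(2::'a) \<noteq> 0"
  shows "polar_kernel m c \<noteq> 0"
proof (cases "m = 0")
  case True
  then have "coeff (polar_kernel m c) 0 = c 0 * (1 + 1)"
    unfolding polar_kernel_def coeff_sum coeff_smult coeff_add coeff_monom by simp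
  then show ?thesis using assms True by auto
next
  case False
  have "coeff (polar_kernel m c) (2 * m) = (\<Sum>j\<le>m. if j = m then c m else 0)"
    unfolding polar_kernel_def coeff_sum by (intro sum.cong refl) (use False in auto)
  then show ?thesis using assms by auto
qed

lemma degree_polar_kernel_le: "degree (polar_kernel m c) \<le> 2 * m"
  unfolding polar_kernel_def
  by (intro degree_sum_le) (auto intro!: degree_le simp: coeff_monom)

lemma sum_shift_below_eq:
  fixes a b :: "nat \<Rightarrow> 'a::comm_ring_1"
  assumes "\<forall>s>n. b s = 0"
  shows "(\<Sum>i=j..n. b i * a (i - j)) = (\<Sum>i\<le>n. a i * b (i + j))"
proof (cases "j \<le> n")
  case True
  have "(\<Sum>i=j..n. b i * a (i - j)) = (\<Sum>i=0..n-j. b (i + j) * a i)"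
    using True sum.shift_bounds_cl_nat_ivl[of "\<lambda>i. b i * a (i - j)" 0 j "n - j"] by simp
  also have "\<dots> = (\<Sum>i\<le>n. a i * b (i + j))"
    by (rule sum.mono_neutral_cong_left) (use assms in \<open>auto simp: mult.commute\<close>)
  finally show ?thesis .
qed (use assms in simp)

lemma quad_part_add:
  assumes "v \<in> polys_below (Suc n)"
  shows "quad_part m c n (u + v) = quad_part m c n u + quad_part m c n v + polar_form m c n u v"
proof -
  have v_high: "\<forall>s>n. coeff v s = 0" using assms by (simp add: polys_below_def)
  have cross: "(\<Sum>i=j..n. coeff u i * coeff v (i - j)) + (\<Sum>i=j..n. coeff v i * coeff u (i - j)) =
      (\<Sum>i\<le>n. (if j \<le> i then coeff u i * coeff v (i - j) else 0)
        + coeff u i * coeff v (i + j))" for j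
  proof -
    have "(\<Sum>i=j..n. coeff u i * coeff v (i - j)) =
        (\<Sum>i\<le>n. if j \<le> i then coeff u i * coeff v (i - j) else 0)"
      by (subst sum.inter_filter[symmetric]) (auto intro: sum.cong)
    then show ?thesis
      by (simp add: sum_shift_below_eq[OF v_high] sum.distrib)
  qed
  have "polar_form m c n u v = (\<Sum>i\<le>n. \<Sum>j\<le>m. c j *
      ((if j \<le> i then coeff u i * coeff v (i - j) else 0) + coeff u i * coeff v (i + j)))"
    unfolding polar_form_def coeff_polar_kernel_mult sum_distrib_left
    by (intro sum.cong refl) (auto simp: algebra_simps)
  also have "\<dots> = (\<Sum>j\<le>m. c j * (\<Sum>i\<le>n.
      (if j \<le> i then coeff u i * coeff v (i - j) else 0) + coeff u i * coeff v (i + j)))"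
    by (subst sum.swap) (simp only: sum_distrib_left)
  also have "\<dots> = (\<Sum>j\<le>m. c j * ((\<Sum>i=j..n. coeff u i * coeff v (i - j)) +
      (\<Sum>i=j..n. coeff v i * coeff u (i - j))))"
    by (simp only: cross)
  finally show ?thesis
    by (simp add: quad_part_def algebra_simps sum.distrib sum_distrib_left)
qed

lemma linear_part_add: "linear_part l n (u + v) = linear_part l n u + linear_part l n v"
  by (simp add: linear_part_def algebra_simps sum.distrib)

lemma polar_form_add_left:
  "polar_form m c n (u + u') v = polar_form m c n u v + polar_form m c n u' v"
  by (simp add: polar_form_def algebra_simps sum.distrib)

lemma polar_form_smult_left: "polar_form m c n (smult a u) v = a * polar_form m c n u v"
  by (simp add: polar_form_def sum_distrib_left mult.assoc)

lemma polar_form_diff_right: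
  "polar_form m c n u (v - v') = polar_form m c n u v - polar_form m c n u v'"
  by (simp add: polar_form_def algebra_simps sum_subtractf)

subsection \<open>The radical of the differenced form\<close>

definition polar_radical :: "nat \<Rightarrow> (nat \<Rightarrow> 'a::comm_ring_1) \<Rightarrow> nat \<Rightarrow> 'a poly \<Rightarrow> 'a poly set" where
  "polar_radical m c n g = {z \<in> polys_below (n - degree g).
     \<forall>y \<in> polys_below (n - degree g). polar_form m c n (g * y) (g * z) = 0}"

lemma polar_form_mult_monom:
  fixes g :: "'a::comm_ring_1 poly"
  assumes "lead_coeff g = 1" and "degree g + r \<le> n"
    and "\<forall>s < degree g + r. coeff (polar_kernel m c * v) (s + m) = 0"
  shows "polar_form m c n (g * monom 1 r) v = coeff (polar_kernel m c * v) (degree g + r + m)"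
proof -
  let ?R = "coeff (polar_kernel m c * v)"
  have "polar_form m c n (g * monom 1 r) v = (\<Sum>s\<le>n. if s = degree g + r then ?R (s + m) else 0)"
    unfolding polar_form_def
  proof (intro sum.cong refl)
    fix s
    have "degree (g * monom 1 r) \<le> degree g + r"
      using degree_mult_le[of g "monom 1 r"] by (simp add: degree_monom_eq)
    then have "coeff (g * monom 1 r) s = 0" if "s > degree g + r"
      using that by (intro coeff_eq_0) simp
    moreover have "coeff (g * monom 1 r) (degree g + r) = 1"
      using assms(1) by (simp add: mult.commute[of g] coeff_monom_mult)
    ultimately show "coeff (g * monom 1 r) s * ?R (s + m) =
        (if s = degree g + r then ?R (s + m) else 0)"
      using assms(3) by (cases s "degree g + r" rule: linorder_cases) auto
  qed
  also have "\<dots> = ?R (degree g + r + m)"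
    using assms(2) by simp
  finally show ?thesis .
qed

text \<open>Testing the radical condition against \<open>y = t\<^sup>r\<close>, \<open>r = 0, 1, \<dots>\<close>, forces the
  coefficients of \<open>polar_kernel m c * (g * z)\<close> at \<open>m + deg g, \<dots>, m + n - 1\<close> to
  vanish one after another, because \<open>g\<close> is monic; those from \<open>n + 2m\<close> on vanish for
  degree reasons.\<close>

lemma polar_radical_eq_0_if_boundary_coeffs_0:
  fixes g :: "'a::idom poly"
  assumes g: "lead_coeff g = 1" "degree g \<le> n" and kernel: "polar_kernel m c \<noteq> 0"
    and z: "z \<in> polar_radical m c n g"
    and low: "\<forall>i < m + degree g. coeff (polar_kernel m c * (g * z)) i = 0"
    and high: "\<forall>i \<in> {n + m..<n + 2 * m}. coeff (polar_kernel m c * (g * z)) i = 0"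
  shows "z = 0"
proof -
  define k where "k = degree g"
  define R where "R = polar_kernel m c * (g * z)"
  have z_below: "z \<in> polys_below (n - k)"
    and z_radical: "\<forall>y\<in>polys_below (n - k). polar_form m c n (g * y) (g * z) = 0"
    using z by (simp_all add: polar_radical_def k_def)
  have "g * z \<in> polys_below (k + (n - k))"
    using mult_in_polys_below[OF z_below] by (simp add: k_def)
  then have "R \<in> polys_below (2 * m + n)"
    unfolding R_def using g(2)
    by (intro mult_in_polys_below degree_polar_kernel_le) (simp add: k_def)
  then have above: "coeff R j = 0" if "n + m \<le> j" for j
    using that high by (cases "j < n + 2 * m") (auto simp: R_def polys_below_def)
  have middle: "coeff R (i + m) = 0" if "i < n" for i
    using that
  proof (induction i rule: less_induct)
    case (less i)
    show ?case
    proof (cases "i < k")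
      case True
      then show ?thesis using low by (simp add: R_def k_def add.commute)
    next
      case False
      have "monom 1 (i - k) \<in> polys_below (n - k)"
        using False less.prems by (intro monom_in_polys_below) simp
      then have "polar_form m c n (g * monom 1 (i - k)) (g * z) = 0"
        using z_radical by blast
      moreover have "polar_form m c n (g * monom 1 (i - k)) (g * z) = coeff R (i + m)"
        using polar_form_mult_monom[OF g(1), of "i - k" n m c "g * z"] False less
        by (simp add: R_def k_def)
      ultimately show ?thesis by simp
    qed
  qed
  have "coeff R j = 0" for j
  proof -
    consider "j < m" | "m \<le> j" "j < n + m" | "n + m \<le> j" by linarith
    then show ?thesis
    proof cases
      case 1
      then show ?thesis using low by (simp add: R_def)
    next
      case 2
      then show ?thesis using middle[of "j - m"] by simp
    qed (rule above)
  qed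
  then have "R = 0" by (simp add: poly_eq_iff)
  then show "z = 0"
    using kernel g(1) by (auto simp: R_def)
qed

lemma card_polar_radical_le:
  fixes g :: "'a::{finite,idom} poly"
  assumes "lead_coeff g = 1" and "degree g \<le> n" and "polar_kernel m c \<noteq> 0"
  shows "card (polar_radical m c n g) \<le> CARD('a) ^ (degree g + 2 * m)"
proof -
  define I where "I = {..<m + degree g} \<union> {n + m..<n + 2 * m}"
  have finite_I: "finite I" by (simp add: I_def)
  have "card I \<le> degree g + 2 * m"
    using card_Un_le[of "{..<m + degree g}" "{n + m..<n + 2 * m}"] by (simp add: I_def)
  have diff_in_radical: "z - z' \<in> polar_radical m c n g"
    if "z \<in> polar_radical m c n g" "z' \<in> polar_radical m c n g" for z z'
    using that
    by (simp add: polar_radical_def diff_in_polys_below right_diff_distrib polar_form_diff_right)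
  have "inj_on (\<lambda>z. restrict (coeff (polar_kernel m c * (g * z))) I) (polar_radical m c n g)"
  proof (rule inj_onI)
    fix z z'
    assume z: "z \<in> polar_radical m c n g" and z': "z' \<in> polar_radical m c n g"
      and agree: "restrict (coeff (polar_kernel m c * (g * z))) I =
        restrict (coeff (polar_kernel m c * (g * z'))) I"
    have "coeff (polar_kernel m c * (g * (z - z'))) i = 0" if "i \<in> I" for i
      using fun_cong[OF agree, of i] that by (simp add: right_diff_distrib)
    then have "z - z' = 0"
      using polar_radical_eq_0_if_boundary_coeffs_0[OF assms diff_in_radical[OF z z']]
      by (auto simp: I_def)
    then show "z = z'" by simp
  qed
  then have "card (polar_radical m c n g) \<le> CARD('a) ^ card I"
    by (rule card_le_power_if_inj_on_restrict(2)[OF _ finite_I])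
  also have "\<dots> \<le> CARD('a) ^ (degree g + 2 * m)"
    using \<open>card I \<le> degree g + 2 * m\<close> by (rule power_increasing) simp
  finally show ?thesis .
qed

lemma add_char_sum_linear_eq_0:
  fixes \<psi> :: "'a::field \<Rightarrow> complex" and L :: "'a poly \<Rightarrow> 'a"
  assumes "nontriv_add_char \<psi>"
    and add: "\<And>y y'. y \<in> polys_below N \<Longrightarrow> y' \<in> polys_below N \<Longrightarrow> L (y + y') = L y + L y'"
    and smult: "\<And>a y. y \<in> polys_below N \<Longrightarrow> L (smult a y) = a * L y"
    and "y\<^sub>1 \<in> polys_below N" and "L y\<^sub>1 \<noteq> 0"
  shows "(\<Sum>y\<in>polys_below N. \<psi> (L y)) = 0"
proof -
  obtain a where a: "\<psi> a \<noteq> 1"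
    using assms(1) unfolding nontriv_add_char_def by blast
  define y\<^sub>0 where "y\<^sub>0 = smult (a / L y\<^sub>1) y\<^sub>1"
  have "y\<^sub>0 \<in> polys_below N" and "L y\<^sub>0 = a"
    using \<open>y\<^sub>1 \<in> polys_below N\<close> \<open>L y\<^sub>1 \<noteq> 0\<close> by (simp_all add: y\<^sub>0_def smult_in_polys_below smult)
  moreover have "\<psi> (L (y + y')) = \<psi> (L y) * \<psi> (L y')"
    if "y \<in> polys_below N" "y' \<in> polys_below N" for y y'
    using assms(1) that by (simp add: add nontriv_add_char_def)
  ultimately show ?thesis
    using a by (intro char_sum_eq_0[where y\<^sub>0 = y\<^sub>0])
      (simp_all add: add_in_polys_below diff_in_polys_below)
qed

lemma QA_mult_monic_shift:
  fixes g :: "'a::field poly"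
  assumes g: "g \<in> monics k" and "k + N = n"
    and y: "y \<in> polys_below N" and z: "z \<in> polys_below N"
  shows "QA m c l (g * (monom 1 N + (y + z))) = QA m c l (g * (monom 1 N + y))
    + (quad_part m c n (g * z) + polar_form m c n (g * monom 1 N) (g * z) + linear_part l n (g * z))
    + polar_form m c n (g * y) (g * z)"
proof -
  let ?G = "g * monom 1 N"
  have QA_eq: "QA m c l (g * (monom 1 N + x)) =
      quad_part m c n (?G + g * x) + linear_part l n (?G + g * x)" if "x \<in> polys_below N" for x
  proof -
    have "monom 1 N + x \<in> monics N"
      using that by (simp add: monics_eq_image)
    then have "g * (monom 1 N + x) \<in> monics n"
      using mult_in_monics[OF g] \<open>k + N = n\<close> by blast
    then show ?thesis
      by (simp add: monics_def QA_eq_quad_part_plus_linear_part distrib_left)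
  qed
  have "g * z \<in> polys_below (k + N)"
    using mult_in_polys_below[OF z, of g k] g by (simp add: monics_def)
  then have gz: "g * z \<in> polys_below (Suc n)"
    using \<open>k + N = n\<close> by (simp add: polys_below_def)
  have "QA m c l (g * (monom 1 N + (y + z))) =
      quad_part m c n ((?G + g * y) + g * z) + linear_part l n ((?G + g * y) + g * z)"
    using QA_eq[OF add_in_polys_below[OF y z]] by (simp add: distrib_left add.assoc)
  also have "\<dots> = quad_part m c n (?G + g * y) + quad_part m c n (g * z)
      + polar_form m c n (?G + g * y) (g * z)
      + linear_part l n (?G + g * y) + linear_part l n (g * z)"
    by (simp only: quad_part_add[OF gz] linear_part_add) (simp add: ac_simps)
  also have "\<dots> = QA m c l (g * (monom 1 N + y))
      + (quad_part m c n (g * z) + polar_form m c n ?G (g * z) + linear_part l n (g * z))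
      + polar_form m c n (g * y) (g * z)"
    using QA_eq[OF y] by (simp add: polar_form_add_left algebra_simps)
  finally show ?thesis .
qed

lemma inner_sum_norm_sq_le:
  fixes \<psi> :: "'a::{finite,field} \<Rightarrow> complex"
  assumes \<psi>: "nontriv_add_char \<psi>" "\<psi> 0 = 1" and kernel: "polar_kernel m c \<noteq> 0"
    and g: "g \<in> monics k" and "k \<le> n"
  shows "(norm (\<Sum>h\<in>monics (n - k). \<psi> (QA m c l (g * h))))\<^sup>2 \<le> CARD('a) ^ (n + 2 * m)"
proof -
  define N where "N = n - k"
  define P where "P = (polys_below N :: 'a poly set)"
  have hom: "\<psi> (x + y) = \<psi> x * \<psi> y" for x y
    using \<psi>(1) by (simp add: nontriv_add_char_def)
  have deg_g: "degree g = k" and "lead_coeff g = 1"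
    using g by (auto simp: monics_def)
  have "(\<Sum>h\<in>monics N. \<psi> (QA m c l (g * h))) = (\<Sum>y\<in>P. \<psi> (QA m c l (g * (monom 1 N + y))))"
    unfolding monics_eq_image P_def by (subst sum.reindex) (auto intro: inj_onI)
  moreover have "(norm (\<Sum>y\<in>P. \<psi> (QA m c l (g * (monom 1 N + y)))))\<^sup>2
      \<le> card P * card (polar_radical m c n g)"
    unfolding polar_radical_def deg_g N_def[symmetric] P_def[symmetric]
  proof (rule weyl_differencing)
    show "\<psi> (x + y) = \<psi> x * \<psi> y" "norm (\<psi> x) = 1" for x y
      using hom add_char_norm_eq_1[OF hom \<psi>(2)] by simp_all
    show "finite P" by (simp add: P_def finite_polys_below)
    show "y + z \<in> P" "y - z \<in> P" if "y \<in> P" "z \<in> P" for y z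
      using that by (simp_all add: P_def add_in_polys_below diff_in_polys_below)
    show "QA m c l (g * (monom 1 N + (y + z))) = QA m c l (g * (monom 1 N + y))
      + (quad_part m c n (g * z) + polar_form m c n (g * monom 1 N) (g * z)
        + linear_part l n (g * z))
      + polar_form m c n (g * y) (g * z)" if "y \<in> P" "z \<in> P" for y z
      using QA_mult_monic_shift[OF g _ that[unfolded P_def]] \<open>k \<le> n\<close> by (simp add: N_def)
    show "(\<Sum>y\<in>P. \<psi> (polar_form m c n (g * y) (g * z))) = 0"
      if "z \<in> P" "\<exists>y\<in>P. polar_form m c n (g * y) (g * z) \<noteq> 0" for z
      using that unfolding P_def
      by (auto intro: add_char_sum_linear_eq_0[OF \<psi>(1)]
          simp: distrib_left polar_form_add_left polar_form_smult_left)
  qed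
  moreover have "card P * card (polar_radical m c n g) \<le> CARD('a) ^ N * CARD('a) ^ (k + 2 * m)"
    using card_polys_below_le card_polar_radical_le[OF \<open>lead_coeff g = 1\<close> _ kernel] \<open>k \<le> n\<close>
    by (intro mult_le_mono) (simp_all add: P_def deg_g)
  then have "real (card P) * real (card (polar_radical m c n g)) \<le> real CARD('a) ^ (n + 2 * m)"
    using \<open>k \<le> n\<close> by (simp add: N_def flip: power_add of_nat_mult of_nat_power)
  ultimately show ?thesis
    by (simp add: N_def)
qed

lemma Tk_le:
  fixes c :: "nat \<Rightarrow> 'a::{finite,field}" and \<psi> :: "'a \<Rightarrow> complex"
  assumes \<psi>: "nontriv_add_char \<psi>" and kernel: "polar_kernel m c \<noteq> 0" and "k \<le> n"
  shows "Tk m c l \<psi> n k \<le> real CARD('a) powr (real k + real (n + 2 * m) / 2)"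
  using \<psi>
proof (cases rule: nontriv_add_char_cases)
  case 1
  then show ?thesis by (simp add: Tk_def)
next
  case 2
  define q where "q = real CARD('a)"
  have "q > 0" by (simp add: q_def)
  have inner: "norm (\<Sum>h\<in>monics (n - k). \<psi> (QA m c l (g * h))) \<le> q powr (real (n + 2 * m) / 2)"
    if "g \<in> monics k" for g
  proof (rule power2_le_imp_le)
    have "(q powr (real (n + 2 * m) / 2))\<^sup>2 = q powr real (n + 2 * m)"
      by (simp add: power2_eq_square flip: powr_add)
    also have "\<dots> = q ^ (n + 2 * m)"
      using \<open>q > 0\<close> by (rule powr_realpow)
    finally show "(norm (\<Sum>h\<in>monics (n - k). \<psi> (QA m c l (g * h))))\<^sup>2 \<le>
        (q powr (real (n + 2 * m) / 2))\<^sup>2"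
      using inner_sum_norm_sq_le[OF \<psi> 2 kernel that \<open>k \<le> n\<close>] by (simp add: q_def)
  qed simp
  have "Tk m c l \<psi> n k \<le> (\<Sum>g\<in>(monics k :: 'a poly set). q powr (real (n + 2 * m) / 2))"
    unfolding Tk_def using inner by (rule sum_mono)
  also have "\<dots> = card (monics k :: 'a poly set) * q powr (real (n + 2 * m) / 2)"
    by simp
  also have "\<dots> \<le> q ^ k * q powr (real (n + 2 * m) / 2)"
    using card_monics_le[of k, where 'a='a]
    by (intro mult_right_mono) (simp_all add: q_def flip: of_nat_power)
  also have "\<dots> = q powr (real k + real (n + 2 * m) / 2)"
    using \<open>q > 0\<close> by (simp add: powr_add powr_realpow)
  finally show ?thesis by (simp add: q_def)
qed

theorem proposition7p2:
  fixes c :: "nat \<Rightarrow> 'a::{finite,field}" and m :: nat and C :: real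
  assumes "odd CARD('a)" and "c m \<noteq> 0" and "C \<ge> 0"
  shows "\<exists>K::real. \<exists>\<epsilon>::nat \<Rightarrow> real. \<exists>N0::nat. \<epsilon> \<longlonglongrightarrow> 0 \<and>
    (\<forall>(l :: nat \<Rightarrow> nat \<Rightarrow> 'a) (\<psi> :: 'a \<Rightarrow> complex) n k.
       nontriv_add_char \<psi> \<longrightarrow> n \<ge> N0 \<longrightarrow> k \<le> n \<longrightarrow> real k \<le> 9 * real n / 20 + C \<longrightarrow>
       Tk m c l \<psi> n k \<le> K * real CARD('a) powr (19 * real n / 20 + \<epsilon> n * real n))"
proof -
  define q where "q = real CARD('a)"
  have kernel: "polar_kernel m c \<noteq> 0"
    using polar_kernel_nonzero[of c m, OF assms(2) two_neq_zero_if_odd_card[OF assms(1)]] .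
  have "Tk m c l \<psi> n k \<le> q powr (C + m) * q powr (19 * real n / 20)"
    if "nontriv_add_char \<psi>" "k \<le> n" "real k \<le> 9 * real n / 20 + C"
    for l :: "nat \<Rightarrow> nat \<Rightarrow> 'a" and \<psi> n k
  proof -
    have "Tk m c l \<psi> n k \<le> q powr (real k + real (n + 2 * m) / 2)"
      using Tk_le[OF that(1) kernel that(2)] by (simp add: q_def)
    also have "\<dots> \<le> q powr ((C + m) + 19 * real n / 20)"
      using that(3) by (intro powr_mono) (auto simp: q_def field_simps)
    finally show ?thesis by (simp add: powr_add)
  qed
  then show ?thesis
    by (intro exI[of _ "q powr (C + m)"] exI[of _ "\<lambda>_. 0"] exI[of _ 0]) (simp add: q_def)
qed

end
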